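(* Let $(q_i,k_i,v_i)_{i=1}^n$ be vectors in $\mathbb{R}^d$, $A_{ij}=\exp(\langle q_i,k_j\rangle/\sqrt d)$, $V\in\mathbb{R}^{n\times d}$ with rows $v_i^\top$, $v_{\max}=\|V\|_{\max}$, $\tilde k_i=k_i/d^{1/4}$, $\tilde v_i=(v_i,v_{\max})\in\mathbb{R}^{d+1}$, $\tilde q_i=q_i/d^{1/4}$, and let $\mathcal{X}_{\mathrm{in}}=\{(\tilde k_i,\tilde v_i)\}_{i=1}^n$ with $\mathcal{X}_{\mathrm{out}}$ indexed by $I_{\mathrm{out}}\subseteq[n]$, $|I_{\mathrm{out}}|=n_{\mathrm{out}}\ge1$. Let $\hat A=\frac{n}{n_{\mathrm{out}}}(A_{ij}\mathbf{1}\{j\in I_{\mathrm{out}}\})_{i,j}$. Define the query points $z_{ij}:=(\tilde q_i,e_j^{d+1})$ for $i\in[n],j\in[d+1]$ ($e_j^{d+1}$ the $j$-th standard basis vector of $\mathbb{R}^{d+1}$), and the kernel $\mathbf{k}_{\mathrm{att}}((\tilde k,\tilde v),(\tilde k',\tilde v'))=\exp(\langle\tilde k,\tilde k'\rangle)\langle\tilde v,\tilde v'\rangle$. Then $$\max\Big(\frac1n\|(\hat A-A)V\|_{\max},\ \frac1n\|(\hat A-A)\mathbf{1}_n\|_\infty\|V\|_{\max}\Big)=\max_{i\in[n],\,j\in[d+1]}\Big|\sum_{l=1}^n\mathbf{k}_{\mathrm{att}}\big(z_{ij},(\tilde k_l,\tilde v_l)\big)\Big(\frac1n-\frac{\mathbf{1}\{l\in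 I_{\mathrm{out}}\}}{n_{\mathrm{out}}}\Big)\Big|.$$ Equivalently, with the universe $\mathcal{X}=\mathcal{X}'\cup\mathcal{X}_{\mathrm{in}}$ where $\mathcal{X}'=\{z_{ij}\}$ occupies the indices $\mathcal{I}=[n(d+1)]$, and $K_{\mathrm{att}}=\mathbf{k}_{\mathrm{att}}(\mathcal{X},\mathcal{X})$, the left-hand side equals the kernel max seminorm $\|K_{\mathrm{att}}(p_{\mathrm{in}}-q_{\mathrm{out}})\|_{\mathcal{I}}=\max_{i\in\mathcal{I}}|e_i^\top K_{\mathrm{att}}(p_{\mathrm{in}}-q_{\mathrm{out}})|$.
   Context: $\|M\|_{\max}$ is the largest absolute entry of a matrix, $\|\cdot\|_\infty$ the largest absolute entry of a vector. $p_{\mathrm{in}}$ and $q_{\mathrm{out}}$ are the uniform probability vectors on $\mathcal{X}_{\mathrm{in}}$ and $\mathcal{X}_{\mathrm{out}}$ within the universe $\mathcal{X}$ (zero on $\mathcal{X}'$). *)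

theory Defs
  imports Complex_Main
begin

text \<open>Conventions: vectors in R^m are functions nat => real, meaningful on indices < m.
  Points q_i, k_i, v_i are families q :: nat => nat => real, i < n, coordinate < d. Indices are 0-based ([n] = {0..<n}).\<close>

definition dotp :: "nat \<Rightarrow> (nat \<Rightarrow> real) \<Rightarrow> (nat \<Rightarrow> real) \<Rightarrow> real" where
  "dotp m x y = (\<Sum>t<m. x t * y t)"

definition attA :: "nat \<Rightarrow> (nat \<Rightarrow> nat \<Rightarrow> real) \<Rightarrow> (nat \<Rightarrow> nat \<Rightarrow> real) \<Rightarrow> nat \<Rightarrow> nat \<Rightarrow> real" where
  "attA d q k i j = exp (dotp d (q i) (k j) / sqrt (real d))"

definition attAhat :: "nat \<Rightarrow> nat \<Rightarrow> (nat \<Rightarrow> nat \<Rightarrow> real) \<Rightarrow> (nat \<Rightarrow> nat \<Rightarrow> real) \<Rightarrow> nat set \<Rightarrow> nat \<Rightarrow> nat \<Rightarrow> real" where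
  "attAhat n d q k Iout i j =
     real n / real (card Iout) * (if j \<in> Iout then attA d q k i j else 0)"

definition maxnorm :: "nat \<Rightarrow> nat \<Rightarrow> (nat \<Rightarrow> nat \<Rightarrow> real) \<Rightarrow> real" where
  "maxnorm n d M = Max {\<bar>M i j\<bar> | i j. i < n \<and> j < d}"

definition supnorm :: "nat \<Rightarrow> (nat \<Rightarrow> real) \<Rightarrow> real" where
  "supnorm n x = Max {\<bar>x i\<bar> | i. i < n}"

definition matmul :: "nat \<Rightarrow> (nat \<Rightarrow> nat \<Rightarrow> real) \<Rightarrow> (nat \<Rightarrow> nat \<Rightarrow> real) \<Rightarrow> nat \<Rightarrow> nat \<Rightarrow> real" where
  "matmul n M N i j = (\<Sum>l<n. M i l * N l j)"

definition mulvec :: "nat \<Rightarrow> (nat \<Rightarrow> nat \<Rightarrow> real) \<Rightarrow> (nat \<Rightarrow> real) \<Rightarrow> nat \<Rightarrow> real" where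
  "mulvec n M x i = (\<Sum>l<n. M i l * x l)"

definition katt :: "nat \<Rightarrow> (nat \<Rightarrow> real) \<times> (nat \<Rightarrow> real) \<Rightarrow> (nat \<Rightarrow> real) \<times> (nat \<Rightarrow> real) \<Rightarrow> real" where
  "katt d x y = exp (dotp d (fst x) (fst y)) * dotp (d + 1) (snd x) (snd y)"

definition tscale :: "nat \<Rightarrow> (nat \<Rightarrow> real) \<Rightarrow> nat \<Rightarrow> real" where
  "tscale d x t = x t / root 4 (real d)"

definition vaug :: "nat \<Rightarrow> real \<Rightarrow> (nat \<Rightarrow> real) \<Rightarrow> nat \<Rightarrow> real" where
  "vaug d vmax x t = (if t < d then x t else if t = d then vmax else 0)"

definition ebasis :: "nat \<Rightarrow> nat \<Rightarrow> real" where
  "ebasis j t = (if t = j then 1 else 0)"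

definition zpt :: "nat \<Rightarrow> (nat \<Rightarrow> nat \<Rightarrow> real) \<Rightarrow> nat \<Rightarrow> nat \<Rightarrow> (nat \<Rightarrow> real) \<times> (nat \<Rightarrow> real)" where
  "zpt d q i j = (tscale d (q i), ebasis j)"

definition xin :: "nat \<Rightarrow> real \<Rightarrow> (nat \<Rightarrow> nat \<Rightarrow> real) \<Rightarrow> (nat \<Rightarrow> nat \<Rightarrow> real) \<Rightarrow> nat \<Rightarrow> (nat \<Rightarrow> real) \<times> (nat \<Rightarrow> real)" where
  "xin d vmax k v l = (tscale d (k l), vaug d vmax (v l))"

text \<open>Universe X = X' \<union> X_in, indexed: index i*(d+1)+j (i<n, j<d+1) is z_ij,
  index n*(d+1)+l (l<n) is the l-th data point.\<close>
definition univX :: "nat \<Rightarrow> nat \<Rightarrow> real \<Rightarrow> (nat \<Rightarrow> nat \<Rightarrow> real) \<Rightarrow> (nat \<Rightarrow> nat \<Rightarrow> real) \<Rightarrow> (nat \<Rightarrow> nat \<Rightarrow> real)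
    \<Rightarrow> nat \<Rightarrow> (nat \<Rightarrow> real) \<times> (nat \<Rightarrow> real)" where
  "univX n d vmax q k v m =
     (if m < n * (d + 1) then zpt d q (m div (d + 1)) (m mod (d + 1))
      else xin d vmax k v (m - n * (d + 1)))"

text \<open>Uniform probability vectors on X_in and X_out inside the universe (zero on X').\<close>
definition p_in :: "nat \<Rightarrow> nat \<Rightarrow> nat \<Rightarrow> real" where
  "p_in n d m = (if n * (d + 1) \<le> m \<and> m < n * (d + 1) + n then 1 / real n else 0)"

definition q_out :: "nat \<Rightarrow> nat \<Rightarrow> nat set \<Rightarrow> nat \<Rightarrow> real" where
  "q_out n d Iout m =
     (if n * (d + 1) \<le> m \<and> m - n * (d + 1) \<in> Iout then 1 / real (card Iout) else 0)"

end

theory Submission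
  imports Defs
begin

text \<open>Both sides are maxima of the same n x (d+1) array. Evaluating the kernel at z_ij against the
  l-th data point gives A_il v_lj for j < d and A_il v_max for j = d, while Ahat - A = -n A diag(u)
  with u_l = 1/n - 1{l in I_out}/n_out. Hence the entries of (Ahat - A) V / n are, up to sign, the
  kernel discrepancies at the z_ij with j < d, and those of (Ahat - A) 1 v_max / n the discrepancies
  at the z_id. In the universe formulation p_in - q_out vanishes on X', and the rows m < n(d+1)
  enumerate the z_ij via i = m div (d+1), j = m mod (d+1).\<close>

lemma setcompr_grid_eq_image:
  "{f i j | i j. i < n \<and> j < d} = (\<lambda>(i, j). f i j) ` ({..<n} \<times> {..<d})"
  by auto

lemma Max_grid_last_column:
  fixes f :: "nat \<Rightarrow> nat \<Rightarrow> 'a::linorder"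
  assumes "n > 0" "d > 0"
  shows "Max {f i j | i j. i < n \<and> j < d + 1}
    = max (Max {f i j | i j. i < n \<and> j < d}) (Max {f i d | i. i < n})"
proof -
  have "{f i j | i j. i < n \<and> j < d + 1}
      = {f i j | i j. i < n \<and> j < d} \<union> {f i d | i. i < n}"
    by (auto simp: less_Suc_eq)
  then show ?thesis
    by (simp only:)
      (rule Max_Un; use assms in \<open>force simp: setcompr_grid_eq_image setcompr_eq_image\<close>)
qed

lemma Max_mult_nonneg:
  fixes c :: "'a::linordered_semiring"
  assumes "finite A" "A \<noteq> {}" "c \<ge> 0"
  shows "c * Max A = Max ((*) c ` A)"
  using assms by (intro mono_Max_commute) (auto simp: mono_def mult_left_mono)

lemma setcompr_div_mod:
  fixes c :: nat
  assumes "c > 0"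
  shows "{f (m div c) (m mod c) | m. m < n * c} = {f i j | i j. i < n \<and> j < c}"
proof (intro set_eqI iffI)
  fix x assume "x \<in> {f (m div c) (m mod c) | m. m < n * c}"
  then obtain m where m: "m < n * c" "x = f (m div c) (m mod c)" by blast
  have "m div c < n" "m mod c < c"
    using m(1) assms by (simp_all add: less_mult_imp_div_less)
  with m(2) show "x \<in> {f i j | i j. i < n \<and> j < c}" by blast
next
  fix x assume "x \<in> {f i j | i j. i < n \<and> j < c}"
  then obtain i j where ij: "i < n" "j < c" "x = f i j" by blast
  have "i * c + j < Suc i * c"
    using ij(2) by simp
  also have "\<dots> \<le> n * c"
    using ij(1) by (intro mult_right_mono) simp_all
  finally have "i * c + j < n * c" .
  moreover have "x = f ((i * c + j) div c) ((i * c + j) mod c)"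
    using ij by simp
  ultimately show "x \<in> {f (m div c) (m mod c) | m. m < n * c}" by blast
qed

lemma sum_lessThan_add_shift:
  fixes f :: "nat \<Rightarrow> 'a::comm_monoid_add"
  assumes "\<And>m. m < N \<Longrightarrow> f m = 0"
  shows "(\<Sum>m<N + n. f m) = (\<Sum>l<n. f (N + l))"
proof -
  have "(\<Sum>m<N + n. f m) = sum f {..<N} + sum f {N..<N + n}"
    using sum.atLeastLessThan_concat[of 0 N "N + n" f] by (simp add: lessThan_atLeast0)
  also have "sum f {..<N} = 0"
    using assms by simp
  also have "sum f {N..<N + n} = (\<Sum>l<n. f (N + l))"
    by (simp add: sum.atLeastLessThan_shift_0 atLeast0LessThan)
  finally show ?thesis by simp
qed

lemma maxnorm_mult:
  assumes "n > 0" "d > 0" "c \<ge> 0"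
  shows "c * maxnorm n d M = maxnorm n d (\<lambda>i j. c * M i j)"
proof -
  have "{\<bar>c * M i j\<bar> | i j. i < n \<and> j < d}
      = (*) c ` {\<bar>M i j\<bar> | i j. i < n \<and> j < d}"
    using \<open>c \<ge> 0\<close> by (auto simp: abs_mult)
  then show ?thesis
    unfolding maxnorm_def
    by (simp only:)
      (rule Max_mult_nonneg; use assms in \<open>force simp: setcompr_grid_eq_image\<close>)
qed

lemma supnorm_mult:
  assumes "n > 0" "c \<ge> 0"
  shows "c * supnorm n x = supnorm n (\<lambda>i. c * x i)"
proof -
  have "{\<bar>c * x i\<bar> | i. i < n} = (*) c ` {\<bar>x i\<bar> | i. i < n}"
    using \<open>c \<ge> 0\<close> by (auto simp: abs_mult)
  then show ?thesis
    unfolding supnorm_def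
    by (simp only:) (rule Max_mult_nonneg; use assms in \<open>force simp: setcompr_eq_image\<close>)
qed

lemma maxnorm_nonneg: "n > 0 \<Longrightarrow> d > 0 \<Longrightarrow> maxnorm n d M \<ge> 0"
  unfolding maxnorm_def setcompr_grid_eq_image
  by (rule order.trans[OF abs_ge_zero Max_ge[where x = "\<bar>M 0 0\<bar>"]]) force+

definition uniform_diff :: "nat \<Rightarrow> nat set \<Rightarrow> nat \<Rightarrow> real" where
  "uniform_diff n I l = 1 / real n - (if l \<in> I then 1 else 0) / real (card I)"

lemma root4_mult_self: "x \<ge> 0 \<Longrightarrow> root 4 x * root 4 x = sqrt (x::real)"
  by (metis numeral_Bit0_eq_double pos2 power2_eq_square real_root_mult_exp
    real_root_pow_pos2 real_root_power sqrt_def)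

lemma dotp_tscale: "dotp d (tscale d x) (tscale d y) = dotp d x y / sqrt (real d)"
  unfolding dotp_def tscale_def
  by (simp add: sum_divide_distrib root4_mult_self[symmetric] field_simps)

lemma dotp_ebasis: "j < m \<Longrightarrow> dotp m (ebasis j) w = w j"
  unfolding dotp_def ebasis_def by (simp add: if_distrib[of "\<lambda>a. a * _"] cong: if_cong)

lemma katt_zpt_xin:
  "j < d + 1 \<Longrightarrow>
    katt d (zpt d q i j) (xin d vmax k v l) = attA d q k i l * vaug d vmax (v l) j"
  unfolding katt_def zpt_def xin_def attA_def by (simp add: dotp_tscale dotp_ebasis)

lemma attAhat_minus_attA:
  "n > 0 \<Longrightarrow>
    attAhat n d q k I i l - attA d q k i l = - real n * attA d q k i l * uniform_diff n I l"
  unfolding attAhat_def uniform_diff_def by (simp add: field_simps)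

lemma matmul_attention_error:
  assumes "n > 0" "j < d"
  shows "matmul n (\<lambda>i l. attAhat n d q k I i l - attA d q k i l) v i j / real n
    = - (\<Sum>l<n. katt d (zpt d q i j) (xin d vmax k v l) * uniform_diff n I l)"
  using assms unfolding matmul_def
  by (simp add: attAhat_minus_attA katt_zpt_xin vaug_def sum_divide_distrib sum_negf[symmetric]
      mult_ac)

lemma mulvec_attention_error:
  assumes "n > 0"
  shows "vmax / real n * mulvec n (\<lambda>i l. attAhat n d q k I i l - attA d q k i l) (\<lambda>_. 1) i
    = - (\<Sum>l<n. katt d (zpt d q i d) (xin d vmax k v l) * uniform_diff n I l)"
  using assms unfolding mulvec_def sum_distrib_left sum_negf[symmetric]
  by (intro sum.cong) (simp_all add: attAhat_minus_attA katt_zpt_xin vaug_def)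

lemma attention_error_eq_Max_discrepancy:
  fixes q k v :: "nat \<Rightarrow> nat \<Rightarrow> real" and I :: "nat set"
  assumes "n > 0" "d > 0"
  defines "vmax \<equiv> maxnorm n d v" and "E \<equiv> \<lambda>i l. attAhat n d q k I i l - attA d q k i l"
  shows "max (1 / real n * maxnorm n d (matmul n E v))
              (1 / real n * supnorm n (mulvec n E (\<lambda>_. 1)) * vmax)
    = Max {\<bar>\<Sum>l<n. katt d (zpt d q i j) (xin d vmax k v l) * uniform_diff n I l\<bar>
           | i j. i < n \<and> j < d + 1}"
proof -
  let ?D = "\<lambda>i j. \<bar>\<Sum>l<n. katt d (zpt d q i j) (xin d vmax k v l) * uniform_diff n I l\<bar>"
  have "1 / real n * maxnorm n d (matmul n E v)
      = maxnorm n d (\<lambda>i j. matmul n E v i j / real n)"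
    using maxnorm_mult[of n d "1 / real n" "matmul n E v"] assms(1,2) by simp
  also have "\<dots> = Max {?D i j | i j. i < n \<and> j < d}"
    unfolding maxnorm_def setcompr_grid_eq_image E_def
    by (intro arg_cong[where f = Max] image_cong)
      (auto simp: matmul_attention_error[where vmax = vmax] assms(1) simp del: abs_divide)
  finally have columns:
    "1 / real n * maxnorm n d (matmul n E v) = Max {?D i j | i j. i < n \<and> j < d}" .
  have "vmax \<ge> 0"
    unfolding vmax_def using assms(1,2) by (rule maxnorm_nonneg)
  have "1 / real n * supnorm n (mulvec n E (\<lambda>_. 1)) * vmax
      = vmax / real n * supnorm n (mulvec n E (\<lambda>_. 1))"
    by simp
  also have "\<dots> = supnorm n (\<lambda>i. vmax / real n * mulvec n E (\<lambda>_. 1) i)"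
    by (rule supnorm_mult) (use \<open>vmax \<ge> 0\<close> assms(1) in simp_all)
  also have "\<dots> = Max {?D i d | i. i < n}"
    unfolding supnorm_def setcompr_eq_image E_def
    by (intro arg_cong[where f = Max] image_cong)
      (simp_all only: mulvec_attention_error[OF assms(1), where v = v] abs_minus_cancel)
  finally have last_column:
    "1 / real n * supnorm n (mulvec n E (\<lambda>_. 1)) * vmax = Max {?D i d | i. i < n}" .
  show ?thesis
    unfolding columns last_column by (rule Max_grid_last_column[OF assms(1,2), of ?D, symmetric])
qed

lemma univX_kernel_discrepancy:
  assumes "m < n * (d + 1)"
  shows "(\<Sum>m'<n * (d + 1) + n. katt d (univX n d vmax q k v m) (univX n d vmax q k v m')
            * (p_in n d m' - q_out n d I m'))
    = (\<Sum>l<n. katt d (zpt d q (m div (d + 1)) (m mod (d + 1))) (xin d vmax k v l)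
            * uniform_diff n I l)"
proof -
  have query: "univX n d vmax q k v m = zpt d q (m div (d + 1)) (m mod (d + 1))"
    using assms by (simp add: univX_def)
  have data: "univX n d vmax q k v (n * (d + 1) + l) = xin d vmax k v l" for l
    by (simp add: univX_def)
  have weight:
    "p_in n d (n * (d + 1) + l) - q_out n d I (n * (d + 1) + l) = uniform_diff n I l" if "l < n" for l
    using that by (simp add: p_in_def q_out_def uniform_diff_def)
  have "(\<Sum>m'<n * (d + 1) + n. katt d (univX n d vmax q k v m) (univX n d vmax q k v m')
            * (p_in n d m' - q_out n d I m'))
      = (\<Sum>l<n. katt d (univX n d vmax q k v m) (univX n d vmax q k v (n * (d + 1) + l))
            * (p_in n d (n * (d + 1) + l) - q_out n d I (n * (d + 1) + l)))"
    by (rule sum_lessThan_add_shift) (simp add: p_in_def q_out_def)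
  also have "\<dots> = (\<Sum>l<n. katt d (zpt d q (m div (d + 1)) (m mod (d + 1))) (xin d vmax k v l)
            * uniform_diff n I l)"
    by (rule sum.cong) (simp_all only: query data weight lessThan_iff)
  finally show ?thesis .
qed

theorem lemmaF2:
  fixes n d :: nat
    and q k v :: "nat \<Rightarrow> nat \<Rightarrow> real"
    and Iout :: "nat set"
  assumes "d \<ge> 1"
    and "Iout \<subseteq> {..<n}"
    and "card Iout \<ge> 1"
  defines "vmax \<equiv> maxnorm n d v"
    and "LHS \<equiv> max (1 / real n * maxnorm n d (matmul n (\<lambda>i j. attAhat n d q k Iout i j - attA d q k i j) v))
                    (1 / real n * supnorm n (mulvec n (\<lambda>i j. attAhat n d q k Iout i j - attA d q k i j) (\<lambda>_. 1))
                       * maxnorm n d v)"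
  shows "LHS = Max {\<bar>\<Sum>l<n. katt d (zpt d q i j) (xin d vmax k v l)
                      * (1 / real n - (if l \<in> Iout then 1 else 0) / real (card Iout))\<bar>
                    | i j. i < n \<and> j < d + 1}
     \<and> LHS = Max {\<bar>\<Sum>m'<n * (d + 1) + n. katt d (univX n d vmax q k v m) (univX n d vmax q k v m')
                      * (p_in n d m' - q_out n d Iout m')\<bar> | m. m < n * (d + 1)}"
proof -
  have "Iout \<noteq> {}"
    using assms(3) by auto
  with assms(2) have "n > 0"
    by auto
  let ?D = "\<lambda>i j. \<bar>\<Sum>l<n. katt d (zpt d q i j) (xin d vmax k v l) * uniform_diff n Iout l\<bar>"
  have "LHS = Max {?D i j | i j. i < n \<and> j < d + 1}"
    unfolding LHS_def vmax_def using \<open>n > 0\<close> assms(1)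
    by (intro attention_error_eq_Max_discrepancy) simp_all
  moreover have "{?D i j | i j. i < n \<and> j < d + 1}
      = {?D (m div (d + 1)) (m mod (d + 1)) | m. m < n * (d + 1)}"
    by (rule setcompr_div_mod[symmetric]) simp
  moreover have "\<dots> = {\<bar>\<Sum>m'<n * (d + 1) + n.
        katt d (univX n d vmax q k v m) (univX n d vmax q k v m') * (p_in n d m' - q_out n d Iout m')\<bar>
      | m. m < n * (d + 1)}"
    unfolding setcompr_eq_image
    by (intro image_cong) (simp_all only: univX_kernel_discrepancy mem_Collect_eq)
  ultimately show ?thesis
    by (simp add: uniform_diff_def)
qed

end
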